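(* Let $G$ be a hypo-unique domination graph of order at least $3$. Then: (i) for every $x\in V(G)$, the graph $G-x$ has no $\gamma$-critical vertices; (ii) for every pair of distinct vertices $x,y$ of $G$, $\gamma(G-\{x,y\})\geq \gamma(G)-1$, and equality holds at least when $y$ does not belong to the unique $\gamma$-set of $G-x$.
   Context: All graphs are finite, simple and undirected. A set $D\subseteq V(G)$ is dominating if every vertex of $G$ not in $D$ has a neighbor in $D$; $\gamma(G)$ is the minimum size of a dominating set, and a dominating set of size $\gamma(G)$ is a $\gamma$-set. A vertex $v$ of a graph $H$ is $\gamma$-critical in $H$ if $\gamma(H-v)<\gamma(H)$. $G$ is a hypo-unique domination graph if $G$ has at least two $\gamma$-sets but for every $v\in V(G)$ the graph $G-v$ has exactly one $\gamma$-set. *)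

theory Defs
  imports Main
begin

text \<open>Vertex-deleted
subgraphs G - S are the induced subgraphs on V - S, represented by the
vertex set W = V - S together with the same relation E.\<close>

definition simple_graph :: "'a set \<Rightarrow> ('a \<Rightarrow> 'a \<Rightarrow> bool) \<Rightarrow> bool" where
  "simple_graph V E \<longleftrightarrow> finite V \<and> (\<forall>u v. E u v \<longrightarrow> E v u) \<and> (\<forall>v. \<not> E v v)
     \<and> (\<forall>u v. E u v \<longrightarrow> u \<in> V \<and> v \<in> V)"

definition dominating :: "('a \<Rightarrow> 'a \<Rightarrow> bool) \<Rightarrow> 'a set \<Rightarrow> 'a set \<Rightarrow> bool" where
  "dominating E W D \<longleftrightarrow> D \<subseteq> W \<and> (\<forall>v \<in> W - D. \<exists>u \<in> D. E u v)"

definition gamma :: "('a \<Rightarrow> 'a \<Rightarrow> bool) \<Rightarrow> 'a set \<Rightarrow> nat" where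
  "gamma E W = Min (card ` {D. dominating E W D})"

definition gamma_set :: "('a \<Rightarrow> 'a \<Rightarrow> bool) \<Rightarrow> 'a set \<Rightarrow> 'a set \<Rightarrow> bool" where
  "gamma_set E W D \<longleftrightarrow> dominating E W D \<and> card D = gamma E W"

definition gamma_critical :: "('a \<Rightarrow> 'a \<Rightarrow> bool) \<Rightarrow> 'a set \<Rightarrow> 'a \<Rightarrow> bool" where
  "gamma_critical E W v \<longleftrightarrow> v \<in> W \<and> gamma E (W - {v}) < gamma E W"

definition hypo_unique :: "'a set \<Rightarrow> ('a \<Rightarrow> 'a \<Rightarrow> bool) \<Rightarrow> bool" where
  "hypo_unique V E \<longleftrightarrow>
     (\<exists>D1 D2. D1 \<noteq> D2 \<and> gamma_set E V D1 \<and> gamma_set E V D2) \<and>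
     (\<forall>v \<in> V. \<exists>!D. gamma_set E (V - {v}) D)"

end

theory Submission
  imports Defs
begin

text \<open>The heart of the argument is that every vertex of a hypo-unique domination graph \<open>G\<close>
of order at least 3 is \<open>\<gamma>\<close>-critical, so \<open>\<gamma>(G - v) = \<gamma>(G) - 1\<close> for all \<open>v\<close>.  The tool is a
swapping argument: if \<open>S\<close> is the unique \<open>\<gamma>\<close>-set of some \<open>G - u\<close> and \<open>a \<in> S\<close> has a neighbour
\<open>y\<close>, then exchanging \<open>a\<close> for \<open>y\<close> would give a second \<open>\<gamma>\<close>-set unless \<open>a\<close> has an external
private neighbour other than \<open>y\<close>.  From this one shows that some vertex is critical (otherwise
two \<open>\<gamma>\<close>-sets of \<open>G\<close> would cover \<open>V\<close> and be matched by private neighbours), that no critical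
vertex is adjacent to a non-critical one, and that no proper nonempty vertex set \<open>A\<close> is closed
under adjacency (the \<open>\<gamma>\<close>-sets of \<open>G - a\<close> and \<open>G - b\<close> for \<open>a \<in> A\<close>, \<open>b \<notin> A\<close> would determine
every \<open>\<gamma>\<close>-set of \<open>G\<close>).

Given criticality, a critical vertex \<open>w\<close> of \<open>G - x\<close> is impossible: a \<open>\<gamma>\<close>-set \<open>T\<close> of
\<open>G - x - w\<close> extended by \<open>w\<close> or by a neighbour \<open>y \<noteq> x\<close> of \<open>w\<close> gives two \<open>\<gamma>\<close>-sets of \<open>G - x\<close>,
and if \<open>x\<close> is the only neighbour of \<open>w\<close> then \<open>T \<union> {x}\<close> dominates \<open>G\<close> with \<open>\<gamma>(G) - 1\<close>
vertices.  Part (ii) follows because the \<open>\<gamma>\<close>-set of \<open>G - x\<close> still dominates \<open>G - x - y\<close> when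
it avoids \<open>y\<close>.\<close>

definition external_private_neighbour ::
    "('a \<Rightarrow> 'a \<Rightarrow> bool) \<Rightarrow> 'a set \<Rightarrow> 'a set \<Rightarrow> 'a \<Rightarrow> 'a \<Rightarrow> bool" where
  "external_private_neighbour E W S a q \<longleftrightarrow> q \<in> W - S \<and> E a q \<and> (\<forall>s \<in> S - {a}. \<not> E s q)"

lemma dominating_subset: "dominating E W D \<Longrightarrow> D \<subseteq> W"
  by (simp add: dominating_def)

lemma dominating_restrict: "dominating E W D \<Longrightarrow> D \<subseteq> W' \<Longrightarrow> W' \<subseteq> W \<Longrightarrow> dominating E W' D"
  unfolding dominating_def by blast

lemma dominating_insert:
  assumes "dominating E (W - {z}) D" "y \<in> W" "y = z \<or> E y z"
  shows "dominating E W (insert y D)"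
  using assms unfolding dominating_def by blast

lemma dominating_extend:
  assumes "dominating E (W - {z}) D" "u \<in> D" "E u z"
  shows "dominating E W D"
  using assms unfolding dominating_def by blast

lemma dominating_Diff_no_private_neighbour:
  assumes "dominating E W S" "a \<in> S" "\<nexists>q. external_private_neighbour E W S a q"
  shows "dominating E (W - {a}) (S - {a})"
  unfolding dominating_def
proof (intro conjI ballI)
  show "S - {a} \<subseteq> W - {a}"
    using assms(1) dominating_subset by blast
next
  fix v assume v: "v \<in> W - {a} - (S - {a})"
  then obtain u where u: "u \<in> S" "E u v"
    using assms(1) unfolding dominating_def by blast
  have "\<not> external_private_neighbour E W S a v"
    using assms(3) by blast
  then show "\<exists>u \<in> S - {a}. E u v"
    using u v unfolding external_private_neighbour_def by (cases "u = a") auto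
qed

lemma dominating_swap:
  assumes "dominating E W S" "a \<in> S" "y \<in> W" "E y a"
    and "\<And>q. external_private_neighbour E W S a q \<Longrightarrow> q = y"
  shows "dominating E W (insert y (S - {a}))"
  unfolding dominating_def
proof (intro conjI ballI)
  show "insert y (S - {a}) \<subseteq> W"
    using assms(1,3) dominating_subset by blast
next
  fix v assume v: "v \<in> W - insert y (S - {a})"
  show "\<exists>u \<in> insert y (S - {a}). E u v"
  proof (cases "v = a")
    case True
    then show ?thesis
      using assms(4) by blast
  next
    case False
    then obtain u where u: "u \<in> S" "E u v"
      using assms(1) v unfolding dominating_def by blast
    show ?thesis
    proof (cases "u = a")
      case True
      have "\<not> external_private_neighbour E W S a v"
        using assms(5) v by blast
      then obtain s where "s \<in> S - {a}" "E s v"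
        using u v False True unfolding external_private_neighbour_def by blast
      then show ?thesis
        by blast
    next
      case False
      then show ?thesis
        using u by blast
    qed
  qed
qed

lemma dominating_glue:
  assumes "dominating E W1 X" "dominating E W2 Y"
    and "W \<inter> A \<subseteq> W1" "W - A \<subseteq> W2" "X \<inter> A \<subseteq> W" "Y - A \<subseteq> W"
    and "\<And>u v. E u v \<Longrightarrow> u \<in> A \<longleftrightarrow> v \<in> A"
  shows "dominating E W ((X \<inter> A) \<union> (Y - A))"
  unfolding dominating_def
proof (intro conjI ballI)
  show "X \<inter> A \<union> (Y - A) \<subseteq> W"
    using assms(5,6) by blast
next
  fix v assume v: "v \<in> W - (X \<inter> A \<union> (Y - A))"
  show "\<exists>u \<in> X \<inter> A \<union> (Y - A). E u v"
  proof (cases "v \<in> A")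
    case True
    then obtain u where "u \<in> X" "E u v"
      using assms(1,3) v unfolding dominating_def by blast
    then show ?thesis
      using assms(7) True by blast
  next
    case False
    then obtain u where "u \<in> Y" "E u v"
      using assms(2,4) v unfolding dominating_def by blast
    then show ?thesis
      using assms(7) False by blast
  qed
qed

lemma gamma_le_card:
  assumes "finite W" "dominating E W D"
  shows "gamma E W \<le> card D"
proof -
  have "card ` {D. dominating E W D} \<subseteq> {..card W}"
    using assms by (auto simp: dominating_def intro: card_mono)
  then have "finite (card ` {D. dominating E W D})"
    using finite_subset by blast
  then show ?thesis
    unfolding gamma_def using assms(2) by (intro Min_le) auto
qed

lemma ex_gamma_set:
  assumes "finite W"
  shows "\<exists>D. gamma_set E W D"
proof -
  have "card ` {D. dominating E W D} \<subseteq> {..card W}"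
    using assms by (auto simp: dominating_def intro: card_mono)
  then have "finite (card ` {D. dominating E W D})"
    using finite_subset by blast
  moreover have "dominating E W W"
    by (simp add: dominating_def)
  ultimately have "gamma E W \<in> card ` {D. dominating E W D}"
    unfolding gamma_def by (intro Min_in) auto
  then show ?thesis
    unfolding gamma_set_def by auto
qed

lemma gamma_setI:
  assumes "finite W" "dominating E W D" "card D \<le> gamma E W"
  shows "gamma_set E W D"
  using gamma_le_card[OF assms(1,2)] assms unfolding gamma_set_def by simp

lemma gamma_set_finite: "finite W \<Longrightarrow> gamma_set E W D \<Longrightarrow> finite D"
  unfolding gamma_set_def dominating_def using finite_subset by blast

lemma gamma_le_gamma_delete:
  assumes "finite W" "z \<in> W"
  shows "gamma E W \<le> gamma E (W - {z}) + 1"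
proof -
  obtain T where T: "gamma_set E (W - {z}) T"
    using ex_gamma_set assms(1) by blast
  then have "dominating E W (insert z T)"
    using assms(2) by (intro dominating_insert) (auto simp: gamma_set_def)
  then have "gamma E W \<le> card (insert z T)"
    using gamma_le_card assms(1) by blast
  also have "\<dots> \<le> card T + 1"
    using gamma_set_finite[OF _ T] assms(1) by (simp add: card_insert_if)
  finally show ?thesis
    using T unfolding gamma_set_def by simp
qed

lemma critical_if_no_private_neighbour:
  assumes "finite W" "gamma_set E W D" "a \<in> D"
    and "\<nexists>q. external_private_neighbour E W D a q"
  shows "gamma_critical E W a"
proof -
  have "dominating E (W - {a}) (D - {a})"
    using assms by (intro dominating_Diff_no_private_neighbour) (auto simp: gamma_set_def)
  then have "gamma E (W - {a}) \<le> card (D - {a})"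
    using gamma_le_card assms(1) by blast
  also have "\<dots> < card D"
    using gamma_set_finite assms by (intro card_Diff1_less) auto
  finally show ?thesis
    using assms unfolding gamma_critical_def gamma_set_def dominating_def by auto
qed

lemma gamma_set_member_has_private_neighbour:
  assumes "finite W" "gamma_set E W D" "a \<in> D" "u \<in> D - {a}" "E u a"
  shows "\<exists>q. external_private_neighbour E W D a q"
proof (rule ccontr)
  assume "\<nexists>q. external_private_neighbour E W D a q"
  then have "dominating E (W - {a}) (D - {a})"
    using assms by (intro dominating_Diff_no_private_neighbour) (auto simp: gamma_set_def)
  then have "dominating E W (D - {a})"
    using assms(4,5) by (rule dominating_extend)
  then have "gamma E W \<le> card (D - {a})"
    using gamma_le_card assms(1) by blast
  moreover have "card (D - {a}) < card D"
    using gamma_set_finite assms by (intro card_Diff1_less) auto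
  ultimately show False
    using assms(2) unfolding gamma_set_def by simp
qed

text \<open>Otherwise exchanging \<open>a\<close> for \<open>y\<close> in \<open>S\<close> gives a second \<open>\<gamma>\<close>-set.\<close>
lemma unique_gamma_set_private_neighbour:
  assumes "finite W" "gamma_set E W S" "\<And>D. gamma_set E W D \<Longrightarrow> D = S"
    and "a \<in> S" "y \<in> W" "E y a" "y \<noteq> a"
  shows "\<exists>q. external_private_neighbour E W S a q \<and> q \<noteq> y"
proof (rule ccontr)
  assume "\<not> ?thesis"
  then have only_y: "\<And>q. external_private_neighbour E W S a q \<Longrightarrow> q = y"
    by blast
  have "dominating E W S"
    using assms(2) by (simp add: gamma_set_def)
  then have "dominating E W (insert y (S - {a}))"
    using assms(4-6) only_y by (rule dominating_swap)
  moreover have "card (insert y (S - {a})) \<le> card S"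
  proof -
    have "card (insert y (S - {a})) \<le> Suc (card (S - {a}))"
      by (simp add: card_insert_le_m1)
    also have "\<dots> = card S"
      using gamma_set_finite[OF assms(1,2)] assms(4) by (rule card_Suc_Diff1)
    finally show ?thesis .
  qed
  ultimately have "gamma_set E W (insert y (S - {a}))"
    using assms(1,2) by (intro gamma_setI) (auto simp: gamma_set_def)
  then have "insert y (S - {a}) = S"
    by (rule assms(3))
  then have "a \<in> insert y (S - {a})"
    using assms(4) by simp
  then show False
    using assms(7) by simp
qed

locale hypo_unique_graph =
  fixes V :: "'a set" and E :: "'a \<Rightarrow> 'a \<Rightarrow> bool"
  assumes simple: "simple_graph V E" and hypo_unique: "hypo_unique V E"
begin

lemma finite_vertices: "finite V"
  using simple unfolding simple_graph_def by blast

lemma edge_sym: "E u v \<Longrightarrow> E v u"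
  using simple unfolding simple_graph_def by blast

lemma edge_irrefl: "\<not> E v v"
  using simple unfolding simple_graph_def by blast

lemma edge_vertices: "E u v \<Longrightarrow> u \<in> V \<and> v \<in> V"
  using simple unfolding simple_graph_def by blast

lemma two_gamma_sets: "\<exists>D1 D2. D1 \<noteq> D2 \<and> gamma_set E V D1 \<and> gamma_set E V D2"
  using hypo_unique unfolding hypo_unique_def by blast

lemma gamma_set_subset: "gamma_set E V D \<Longrightarrow> D \<subseteq> V"
  unfolding gamma_set_def dominating_def by blast

lemma gamma_set_dominates: "gamma_set E V D \<Longrightarrow> v \<in> V \<Longrightarrow> v \<notin> D \<Longrightarrow> \<exists>u \<in> D. E u v"
  unfolding gamma_set_def dominating_def by blast

definition Sx :: "'a \<Rightarrow> 'a set" where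
  "Sx x = (THE D. gamma_set E (V - {x}) D)"

lemma Sx_gamma_set: "x \<in> V \<Longrightarrow> gamma_set E (V - {x}) (Sx x)"
  unfolding Sx_def using hypo_unique unfolding hypo_unique_def by (metis theI')

lemma Sx_unique: "x \<in> V \<Longrightarrow> gamma_set E (V - {x}) D \<Longrightarrow> D = Sx x"
  using Sx_gamma_set hypo_unique unfolding hypo_unique_def by blast

lemma Sx_dominating: "x \<in> V \<Longrightarrow> dominating E (V - {x}) (Sx x)"
  using Sx_gamma_set unfolding gamma_set_def by blast

lemma card_Sx: "x \<in> V \<Longrightarrow> card (Sx x) = gamma E (V - {x})"
  using Sx_gamma_set unfolding gamma_set_def by blast

lemma Sx_subset: "x \<in> V \<Longrightarrow> Sx x \<subseteq> V - {x}"
  using Sx_dominating dominating_subset by blast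

lemma finite_Sx: "x \<in> V \<Longrightarrow> finite (Sx x)"
  using Sx_subset finite_vertices finite_subset by blast

lemma Sx_dominates: "x \<in> V \<Longrightarrow> v \<in> V \<Longrightarrow> v \<noteq> x \<Longrightarrow> v \<notin> Sx x \<Longrightarrow> \<exists>u \<in> Sx x. E u v"
  using Sx_dominating unfolding dominating_def by blast

lemma Sx_private_neighbour:
  assumes "u \<in> V" "a \<in> Sx u" "y \<in> V - {u}" "E y a" "y \<noteq> a"
  shows "\<exists>q. external_private_neighbour E (V - {u}) (Sx u) a q \<and> q \<noteq> y"
  using assms finite_vertices
  by (intro unique_gamma_set_private_neighbour[OF _ Sx_gamma_set Sx_unique]) auto

lemma Sx_eq_if_not_critical:
  assumes "gamma_set E V D" "u \<in> V" "u \<notin> D" "\<not> gamma_critical E V u"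
  shows "Sx u = D"
proof -
  have "dominating E (V - {u}) D"
    using assms(1,3) gamma_set_subset unfolding gamma_set_def
    by (blast intro: dominating_restrict)
  moreover have "card D \<le> gamma E (V - {u})"
    using assms(1,2,4) unfolding gamma_set_def gamma_critical_def by simp
  ultimately show ?thesis
    using assms(2) finite_vertices by (intro Sx_unique[symmetric] gamma_setI) auto
qed

lemma critical_if_outside_two_gamma_sets:
  assumes "gamma_set E V D1" "gamma_set E V D2" "D1 \<noteq> D2" "u \<in> V" "u \<notin> D1" "u \<notin> D2"
  shows "gamma_critical E V u"
  using Sx_eq_if_not_critical assms by metis

lemma card_Sx_critical:
  assumes "gamma_critical E V u"
  shows "card (Sx u) + 1 = gamma E V"
  using assms gamma_le_gamma_delete[OF finite_vertices, of u E] card_Sx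
  unfolding gamma_critical_def by fastforce

lemma neighbour_of_critical_notin_Sx:
  assumes "gamma_critical E V u" "E u y"
  shows "y \<notin> Sx u"
proof
  assume "y \<in> Sx u"
  have "u \<in> V"
    using assms(1) unfolding gamma_critical_def by blast
  then have "dominating E V (Sx u)"
    using Sx_dominating \<open>y \<in> Sx u\<close> edge_sym[OF assms(2)] by (blast intro: dominating_extend)
  then have "gamma E V \<le> card (Sx u)"
    using gamma_le_card finite_vertices by blast
  then show False
    using card_Sx_critical[OF assms(1)] by simp
qed

lemma insert_Sx_gamma_set:
  assumes "gamma_critical E V u" "y = u \<or> E y u"
  shows "gamma_set E V (insert y (Sx u))"
proof -
  have u: "u \<in> V"
    using assms(1) unfolding gamma_critical_def by blast
  have y: "y \<in> V" "y \<notin> Sx u"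
    using assms u Sx_subset neighbour_of_critical_notin_Sx edge_sym edge_vertices by blast+
  have "dominating E V (insert y (Sx u))"
    using Sx_dominating[OF u] y(1) assms(2) by (rule dominating_insert)
  moreover have "card (insert y (Sx u)) = gamma E V"
    using y(2) finite_Sx[OF u] card_Sx_critical[OF assms(1)] by simp
  ultimately show ?thesis
    unfolding gamma_set_def by blast
qed

lemma Sx_of_noncritical_neighbour:
  assumes "gamma_critical E V x" "\<not> gamma_critical E V v" "E x v"
  shows "Sx v = insert x (Sx x)"
proof -
  have "v \<notin> insert x (Sx x)"
    using assms(1,3) neighbour_of_critical_notin_Sx edge_irrefl by blast
  moreover have "gamma_set E V (insert x (Sx x))"
    using insert_Sx_gamma_set[OF assms(1)] by blast
  ultimately show ?thesis
    using Sx_eq_if_not_critical assms(2,3) edge_vertices by blast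
qed

lemma critical_is_leaf_at_noncritical_neighbour:
  assumes "gamma_critical E V x" "\<not> gamma_critical E V v" "E x v" "E x z"
  shows "z = v"
proof (rule ccontr)
  assume "z \<noteq> v"
  have x: "x \<in> V" "x \<notin> Sx x" and v: "v \<in> V"
    using assms(1,3) Sx_subset edge_vertices unfolding gamma_critical_def by blast+
  have Sx_v: "Sx v = insert x (Sx x)"
    using Sx_of_noncritical_neighbour assms(1-3) by blast
  obtain q where q: "external_private_neighbour E (V - {v}) (Sx v) x q"
    using Sx_private_neighbour[OF v, of x z] Sx_v assms(4) \<open>z \<noteq> v\<close> edge_vertices edge_sym
      edge_irrefl by blast
  then have "q \<in> V" "q \<noteq> x" "q \<notin> Sx x"
    using Sx_v unfolding external_private_neighbour_def by auto
  then obtain u where "u \<in> Sx x" "E u q"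
    using Sx_dominates[OF x(1)] by blast
  moreover have "u \<in> Sx v - {x}" if "u \<in> Sx x"
    using that x(2) Sx_v by blast
  ultimately show False
    using q unfolding external_private_neighbour_def by blast
qed

lemma noncritical_has_at_most_one_critical_neighbour:
  assumes "\<not> gamma_critical E V w"
    and "gamma_critical E V z" "E z w" and "gamma_critical E V q" "E q w"
  shows "z = q"
proof (rule ccontr)
  assume "z \<noteq> q"
  have "insert z (Sx z) = insert q (Sx q)"
    using Sx_of_noncritical_neighbour assms by metis
  then have "z \<in> Sx q"
    using \<open>z \<noteq> q\<close> by blast
  let ?D = "insert w (Sx q)"
  have D: "gamma_set E V ?D"
    using insert_Sx_gamma_set[OF assms(4)] edge_sym[OF assms(5)] by blast
  have "w \<noteq> z"
    using assms(3) edge_irrefl by blast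
  then obtain p where "external_private_neighbour E V ?D z p"
    using gamma_set_member_has_private_neighbour[OF finite_vertices D, of z w]
      \<open>z \<in> Sx q\<close> edge_sym[OF assms(3)] by blast
  moreover have "p = w" if "E z p" for p
    using critical_is_leaf_at_noncritical_neighbour assms(1-3) that by blast
  ultimately show False
    unfolding external_private_neighbour_def by blast
qed

lemma critical_not_adjacent_to_noncritical:
  assumes "gamma_critical E V x" "\<not> gamma_critical E V v"
  shows "\<not> E x v"
proof
  assume "E x v"
  have x: "x \<in> V" "x \<notin> Sx x"
    using assms(1) Sx_subset unfolding gamma_critical_def by blast+
  have v: "v \<in> V" "v \<noteq> x" "v \<notin> Sx x"
    using \<open>E x v\<close> edge_vertices edge_irrefl neighbour_of_critical_notin_Sx[OF assms(1)] by blast+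
  have Sx_v: "Sx v = insert x (Sx x)"
    using Sx_of_noncritical_neighbour assms \<open>E x v\<close> by blast
  have critical_outside: "gamma_critical E V z" if "z \<in> V" "z \<noteq> v" "z \<notin> Sx v" for z
  proof (rule critical_if_outside_two_gamma_sets)
    show "gamma_set E V (insert x (Sx x))" "gamma_set E V (insert v (Sx x))"
      using insert_Sx_gamma_set[OF assms(1)] edge_sym[OF \<open>E x v\<close>] by blast+
    have "x \<notin> insert v (Sx x)"
      using x(2) v(2) by simp
    then show "insert x (Sx x) \<noteq> insert v (Sx x)"
      by (metis insertI1)
    show "z \<in> V" "z \<notin> insert x (Sx x)" "z \<notin> insert v (Sx x)"
      using that unfolding Sx_v by simp_all
  qed
  obtain w where w: "w \<in> Sx x" "E w v"
    using Sx_dominates[OF x(1) v] by blast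
  have "w \<noteq> x"
    using w(1) x(2) by blast
  then have w_noncritical: "\<not> gamma_critical E V w"
    using noncritical_has_at_most_one_critical_neighbour[OF assms(2) _ w(2) assms(1) \<open>E x v\<close>]
    by blast
  have "v \<noteq> w"
    using w(1) v(3) by blast
  then obtain q where q: "external_private_neighbour E (V - {x}) (Sx x) w q" "q \<noteq> v"
    using Sx_private_neighbour[OF x(1) w(1), of v] v(1,2) edge_sym[OF w(2)] by blast
  then have "q \<in> V - {v}" "q \<notin> Sx v" "E q w" "q \<noteq> w"
    using Sx_v w(1) edge_sym unfolding external_private_neighbour_def by auto
  then have "gamma_critical E V q"
    using critical_outside by blast
  have "w \<in> Sx v"
    using Sx_v w(1) by blast
  then obtain z where z: "external_private_neighbour E (V - {v}) (Sx v) w z" "z \<noteq> q"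
    using Sx_private_neighbour[OF v(1), of w q] \<open>q \<in> V - {v}\<close> \<open>E q w\<close> \<open>q \<noteq> w\<close> by blast
  then have "gamma_critical E V z" "E z w"
    using critical_outside edge_sym unfolding external_private_neighbour_def by auto
  then show False
    using noncritical_has_at_most_one_critical_neighbour[OF w_noncritical]
      \<open>gamma_critical E V q\<close> \<open>E q w\<close> z(2) by blast
qed

lemma ex_critical:
  assumes "card V \<ge> 3"
  shows "\<exists>u \<in> V. gamma_critical E V u"
proof (rule ccontr)
  assume "\<not> ?thesis"
  then have noncritical: "\<And>u. \<not> gamma_critical E V u"
    unfolding gamma_critical_def by blast
  obtain D1 D2 where D: "D1 \<noteq> D2" "gamma_set E V D1" "gamma_set E V D2"
    using two_gamma_sets by blast
  have finite: "finite D1" "finite D2"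
    using D gamma_set_finite finite_vertices by blast+
  have cover: "V \<subseteq> D1 \<union> D2"
    using critical_if_outside_two_gamma_sets[OF D(2,3,1)] noncritical by blast
  have has_private: "\<exists>q. external_private_neighbour E V D1 a q" if "a \<in> D1" for a
    using critical_if_no_private_neighbour[OF finite_vertices D(2) that] noncritical by blast
  have "card D1 \<le> card (D2 - D1)"
  proof (rule card_le_if_inj_on_rel[where r = "external_private_neighbour E V D1"])
    show "\<exists>q. q \<in> D2 - D1 \<and> external_private_neighbour E V D1 a q" if "a \<in> D1" for a
      using has_private[OF that] cover unfolding external_private_neighbour_def by blast
    show "a1 = a2" if "a1 \<in> D1" "a2 \<in> D1" "external_private_neighbour E V D1 a1 q"
      "external_private_neighbour E V D1 a2 q" for a1 a2 q
      using that unfolding external_private_neighbour_def by blast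
  qed (use finite in simp)
  moreover have "card D1 = card D2"
    using D(2,3) unfolding gamma_set_def by simp
  ultimately have "D2 - D1 = D2"
    using finite(2) by (metis Diff_subset card_seteq)
  then have disjoint: "D1 \<inter> D2 = {}"
    by blast
  then have "card V = card D1 + card D2"
    using cover gamma_set_subset[OF D(2)] gamma_set_subset[OF D(3)] finite
    by (metis card_Un_disjoint subset_antisym Un_least)
  then have "\<not> card D1 \<le> Suc 0"
    using assms \<open>card D1 = card D2\<close> by simp
  then obtain a1 a2 where a: "a1 \<in> D1" "a2 \<in> D1" "a1 \<noteq> a2"
    using card_le_Suc0_iff_eq[OF finite(1)] by blast
  have a_V: "a1 \<in> V" "a2 \<in> V"
    using a gamma_set_subset[OF D(2)] by blast+
  have Sx_a1: "Sx a1 = D2"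
    using Sx_eq_if_not_critical[OF D(3) a_V(1)] a(1) disjoint noncritical by blast
  obtain b where b: "external_private_neighbour E V D1 a2 b"
    using has_private[OF a(2)] by blast
  then have "b \<in> D2" "E a2 b" "a2 \<noteq> b"
    using cover a(2) unfolding external_private_neighbour_def by auto
  then obtain q where q: "external_private_neighbour E (V - {a1}) D2 b q" "q \<noteq> a2"
    using Sx_private_neighbour[OF a_V(1), of b a2] Sx_a1 a_V(2) a(3) edge_sym by auto
  then have "q \<in> D1 - {a2}" "E q b"
    using cover edge_sym unfolding external_private_neighbour_def by auto
  then show False
    using b unfolding external_private_neighbour_def by blast
qed

lemma Sx_eq_off_closed_set:
  assumes "z \<in> A" "z \<in> V" "gamma_set E V D"
    and closed: "\<And>u v. E u v \<Longrightarrow> u \<in> A \<longleftrightarrow> v \<in> A"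
  shows "Sx z - A = D - A"
proof -
  have D: "dominating E V D" "finite D" "D \<subseteq> V" "card D = gamma E V"
    using assms(3) gamma_set_finite finite_vertices gamma_set_subset unfolding gamma_set_def
    by blast+
  have S: "finite (Sx z)" "Sx z \<subseteq> V - {z}"
    using finite_Sx Sx_subset assms(2) by blast+
  have "dominating E V ((D \<inter> A) \<union> (Sx z - A))"
    by (rule dominating_glue[OF D(1) Sx_dominating[OF assms(2)] _ _ _ _ closed])
      (use assms(1) D(3) S(2) in auto)
  then have "gamma E V \<le> card ((D \<inter> A) \<union> (Sx z - A))"
    by (rule gamma_le_card[OF finite_vertices])
  also have "\<dots> = card (D \<inter> A) + card (Sx z - A)"
    using D(2) S(1) by (intro card_Un_disjoint) auto
  finally have le: "card (D - A) \<le> card (Sx z - A)"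
    using card_Int_Diff[OF D(2), of A] D(4) by simp
  have "dominating E (V - {z}) ((Sx z \<inter> A) \<union> (D - A))"
    by (rule dominating_glue[OF Sx_dominating[OF assms(2)] D(1) _ _ _ _ closed])
      (use assms(1) D(3) S(2) in auto)
  moreover have "card ((Sx z \<inter> A) \<union> (D - A)) = card (Sx z \<inter> A) + card (D - A)"
    using D(2) S(1) by (intro card_Un_disjoint) auto
  then have "card ((Sx z \<inter> A) \<union> (D - A)) \<le> card (Sx z)"
    using le card_Int_Diff[OF S(1), of A] by simp
  ultimately have "gamma_set E (V - {z}) ((Sx z \<inter> A) \<union> (D - A))"
    using finite_vertices card_Sx[OF assms(2)] by (intro gamma_setI) auto
  then have "(Sx z \<inter> A) \<union> (D - A) = Sx z"
    by (rule Sx_unique[OF assms(2)])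
  then show ?thesis
    by blast
qed

lemma no_closed_proper_subset:
  assumes "a \<in> A" "A \<subseteq> V" "b \<in> V - A"
    and closed: "\<And>u v. E u v \<Longrightarrow> u \<in> A \<longleftrightarrow> v \<in> A"
  shows False
proof -
  obtain D1 D2 where D: "D1 \<noteq> D2" "gamma_set E V D1" "gamma_set E V D2"
    using two_gamma_sets by blast
  have closed_complement: "E u v \<Longrightarrow> u \<in> V - A \<longleftrightarrow> v \<in> V - A" for u v
    using closed edge_vertices by blast
  have "D1 - A = Sx a - A" "D2 - A = Sx a - A"
    using Sx_eq_off_closed_set[OF assms(1) _ _ closed] D(2,3) assms(1,2) by (metis subsetD)+
  moreover have "D1 - (V - A) = Sx b - (V - A)" "D2 - (V - A) = Sx b - (V - A)"
    using Sx_eq_off_closed_set[OF assms(3) _ _ closed_complement] D(2,3) assms(3)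
    by (metis DiffD1)+
  moreover have "D = (D - A) \<union> (D - (V - A))" if "gamma_set E V D" for D
    using gamma_set_subset[OF that] by blast
  ultimately show False
    using D by metis
qed

theorem all_vertices_critical:
  assumes "card V \<ge> 3" "x \<in> V"
  shows "gamma_critical E V x"
proof (rule ccontr)
  assume "\<not> gamma_critical E V x"
  define A where "A = {u \<in> V. \<not> gamma_critical E V u}"
  obtain b where "b \<in> V" "gamma_critical E V b"
    using ex_critical assms(1) by blast
  moreover have "E u v \<Longrightarrow> u \<in> A \<longleftrightarrow> v \<in> A" for u v
    using critical_not_adjacent_to_noncritical edge_sym edge_vertices unfolding A_def by blast
  ultimately show False
    using no_closed_proper_subset[of x A b] assms(2) \<open>\<not> gamma_critical E V x\<close>
    unfolding A_def by blast
qed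

corollary gamma_delete_vertex:
  assumes "card V \<ge> 3" "x \<in> V"
  shows "gamma E (V - {x}) + 1 = gamma E V"
  using all_vertices_critical[OF assms] gamma_le_gamma_delete[OF finite_vertices assms(2), of E]
  unfolding gamma_critical_def by linarith

lemma ex_neighbour:
  assumes "card V \<ge> 3" "w \<in> V"
  shows "\<exists>y. E w y"
proof (rule ccontr)
  assume "\<nexists>y. E w y"
  then have isolated: "\<not> E u w" for u
    using edge_sym by blast
  have "D = insert w (Sx w)" if D: "gamma_set E V D" for D
  proof -
    have "w \<in> D"
      using gamma_set_dominates[OF D assms(2)] isolated by blast
    have "\<nexists>q. external_private_neighbour E V D w q"
      using \<open>\<nexists>y. E w y\<close> unfolding external_private_neighbour_def by blast
    then have "dominating E (V - {w}) (D - {w})"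
      using D \<open>w \<in> D\<close> unfolding gamma_set_def by (blast intro: dominating_Diff_no_private_neighbour)
    moreover have "card (D - {w}) = gamma E (V - {w})"
      using gamma_delete_vertex[OF assms] D \<open>w \<in> D\<close> gamma_set_finite[OF finite_vertices D]
      unfolding gamma_set_def by simp
    ultimately have "D - {w} = Sx w"
      using Sx_unique[OF assms(2)] unfolding gamma_set_def by blast
    then show ?thesis
      using \<open>w \<in> D\<close> by blast
  qed
  then show False
    using two_gamma_sets by metis
qed

theorem vertex_deleted_no_critical:
  assumes "card V \<ge> 3" "x \<in> V"
  shows "\<not> gamma_critical E (V - {x}) w"
proof
  assume "gamma_critical E (V - {x}) w"
  then have w: "w \<in> V - {x}" and lt: "gamma E (V - {x} - {w}) < gamma E (V - {x})"
    unfolding gamma_critical_def by auto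
  obtain T where T: "gamma_set E (V - {x} - {w}) T"
    using ex_gamma_set finite_vertices by blast
  have T_dom: "dominating E (V - {x} - {w}) T"
    using T unfolding gamma_set_def by blast
  have T_finite: "finite T"
    using T gamma_set_finite finite_vertices by blast
  have "w \<notin> T"
    using dominating_subset[OF T_dom] by blast
  have card_T: "card T + 1 = gamma E (V - {x})"
    using lt T gamma_le_gamma_delete[of "V - {x}" w E] finite_vertices w
    unfolding gamma_set_def by simp
  obtain y where "E w y"
    using ex_neighbour assms(1) w by blast
  show False
  proof (cases "y = x")
    case True
    have "V - {w} - {x} = V - {x} - {w}"
      by blast
    then have "dominating E (V - {w} - {x}) T"
      using T_dom by simp
    then have "dominating E (V - {w}) (insert x T)"
      using assms(2) w by (intro dominating_insert) auto
    moreover have "E x w"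
      using \<open>E w y\<close> True edge_sym by blast
    ultimately have "dominating E V (insert x T)"
      by (intro dominating_extend[of E V w "insert x T" x]) auto
    then have "gamma E V \<le> card (insert x T)"
      using gamma_le_card finite_vertices by blast
    also have "\<dots> \<le> card T + 1"
      using T_finite by (simp add: card_insert_if)
    finally show False
      using card_T gamma_delete_vertex[OF assms] by simp
  next
    case False
    have extension: "insert u T = Sx x" if "u \<in> V - {x}" "u = w \<or> E u w" for u
    proof (rule Sx_unique[OF assms(2)], rule gamma_setI)
      show "dominating E (V - {x}) (insert u T)"
        using T_dom that by (rule dominating_insert)
      show "card (insert u T) \<le> gamma E (V - {x})"
        using T_finite card_T by (simp add: card_insert_if)
    qed (use finite_vertices in simp)
    have "y \<in> V - {x}" "E y w"
      using \<open>E w y\<close> False edge_vertices edge_sym by blast+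
    then have "insert w T = insert y T"
      using extension w by simp
    then have "w \<in> insert y T"
      by blast
    then show False
      using \<open>w \<notin> T\<close> \<open>E w y\<close> edge_irrefl by blast
  qed
qed

theorem gamma_delete_two_vertices:
  assumes "card V \<ge> 3" "x \<in> V" "y \<in> V" "x \<noteq> y"
  shows "gamma E (V - {x, y}) \<ge> gamma E V - 1"
    and "y \<notin> Sx x \<Longrightarrow> gamma E (V - {x, y}) = gamma E V - 1"
proof -
  have V_xy: "V - {x, y} = V - {x} - {y}"
    by blast
  have "gamma E (V - {x} - {y}) \<ge> gamma E (V - {x})"
    using vertex_deleted_no_critical[OF assms(1,2), of y] assms(3,4)
    unfolding gamma_critical_def by auto
  then show ge: "gamma E (V - {x, y}) \<ge> gamma E V - 1"
    using gamma_delete_vertex[OF assms(1,2)] V_xy by simp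
  assume "y \<notin> Sx x"
  then have "dominating E (V - {x} - {y}) (Sx x)"
    using Sx_dominating[OF assms(2)] Sx_subset[OF assms(2)] by (blast intro: dominating_restrict)
  then have "gamma E (V - {x} - {y}) \<le> card (Sx x)"
    using gamma_le_card finite_vertices by blast
  then show "gamma E (V - {x, y}) = gamma E V - 1"
    using ge card_Sx[OF assms(2)] gamma_delete_vertex[OF assms(1,2)] V_xy by simp
qed

end

theorem corollary3p3:
  fixes V :: "'a set" and E :: "'a \<Rightarrow> 'a \<Rightarrow> bool"
  assumes "simple_graph V E"
    and "hypo_unique V E"
    and "card V \<ge> 3"
  shows "(\<forall>x \<in> V. \<forall>w. \<not> gamma_critical E (V - {x}) w)
       \<and> (\<forall>x \<in> V. \<forall>y \<in> V. x \<noteq> y \<longrightarrow>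
            gamma E (V - {x, y}) \<ge> gamma E V - 1
          \<and> (y \<notin> (THE D. gamma_set E (V - {x}) D) \<longrightarrow> gamma E (V - {x, y}) = gamma E V - 1))"
proof -
  interpret hypo_unique_graph V E
    using assms(1,2) by unfold_locales
  show ?thesis
    using vertex_deleted_no_critical gamma_delete_two_vertices assms(3) unfolding Sx_def by blast
qed

end
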